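(* Let $W=\mathbb C^N$ and let $\mathcal I\subset \mathrm{Sym}(W)$ be a homogeneous ideal. Suppose that for some integers $0\le q<d$ one has $\dim\mathcal I_d\ge \dim S^{d-q}W=\binom{N+d-q-1}{d-q}$. Then for every integer $\tau\ge 0$, $$\dim \mathcal I_{d+\tau}\ge \dim S^{d-q+\tau}W=\binom{N+\tau+d-q-1}{\tau+d-q}.$$
   Context: $S^dW$ denotes the space of homogeneous polynomials of degree $d$ in $N$ variables and $\mathrm{Sym}(W)=\bigoplus_d S^dW$ is the polynomial ring. For a homogeneous ideal $\mathcal I$, $\mathcal I_d=\mathcal I\cap S^dW$ is its degree $d$ component. *)

theory Defs
  imports Complex_Main "HOL-Library.Poly_Mapping"
begin

text \<open>Polynomials over the complex numbers are represented as finitely supported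
  maps from monomials (finitely supported exponent vectors) to coefficients.\<close>

type_synonym cpoly = "(nat \<Rightarrow>\<^sub>0 nat) \<Rightarrow>\<^sub>0 complex"

definition mdeg :: "(nat \<Rightarrow>\<^sub>0 nat) \<Rightarrow> nat" where
  "mdeg m = (\<Sum>i\<in>Poly_Mapping.keys m. Poly_Mapping.lookup m i)"

definition SymW :: "nat \<Rightarrow> cpoly set" where
  "SymW N = {p. \<forall>m\<in>Poly_Mapping.keys p. Poly_Mapping.keys m \<subseteq> {..<N}}"

definition SdW :: "nat \<Rightarrow> nat \<Rightarrow> cpoly set" where
  "SdW N d = {p \<in> SymW N. \<forall>m\<in>Poly_Mapping.keys p. mdeg m = d}"

definition hom_part :: "nat \<Rightarrow> cpoly \<Rightarrow> cpoly" where
  "hom_part d p = Abs_poly_mapping (\<lambda>m. Poly_Mapping.lookup p m when mdeg m = d)"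

definition is_ideal :: "nat \<Rightarrow> cpoly set \<Rightarrow> bool" where
  "is_ideal N I \<longleftrightarrow> I \<subseteq> SymW N \<and> 0 \<in> I \<and> (\<forall>p\<in>I. \<forall>q\<in>I. p + q \<in> I)
     \<and> (\<forall>f\<in>SymW N. \<forall>p\<in>I. f * p \<in> I)"

definition is_homogeneous_ideal :: "nat \<Rightarrow> cpoly set \<Rightarrow> bool" where
  "is_homogeneous_ideal N I \<longleftrightarrow> is_ideal N I \<and> (\<forall>p\<in>I. \<forall>d. hom_part d p \<in> I)"

definition cscale :: "complex \<Rightarrow> cpoly \<Rightarrow> cpoly" where
  "cscale c p = Poly_Mapping.map (\<lambda>a. c * a) p"

definition cdim :: "cpoly set \<Rightarrow> nat" where
  "cdim V = vector_space.dim cscale V"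

end

theory Submission
  imports Defs
begin

text \<open>Fix a monomial order. The leading monomials of the nonzero elements of \<open>I\<^sub>e\<close> form a set
  \<open>L\<^sub>e\<close> of degree-\<open>e\<close> monomials with \<open>|L\<^sub>e| = dim I\<^sub>e\<close>, and since multiplying by a variable
  shifts the leading monomial, \<open>x\<^sub>l L\<^sub>e \<subseteq> L\<^bsub>e+1\<^esub>\<close>. It therefore suffices to prove a
  Macaulay-type statement about sets of monomials: if a set \<open>M\<close> of monomials of degree \<open>d\<close> in
  \<open>n\<close> variables has at least as many elements as there are monomials of degree \<open>k \<le> d\<close>,
  then its upper shadow \<open>\<Union>\<^sub>l x\<^sub>l M\<close> has at least as many elements as there are monomials of
  degree \<open>k + 1\<close>. Compressions with respect to a pair of
  variables preserve \<open>|M|\<close> and do not enlarge the shadow, so \<open>M\<close> may be assumed stable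
  under moving exponent from the last variable to any other one. Splitting \<open>M\<close> according to
  whether the last exponent vanishes and using Pascal's rule then reduces the claim to \<open>n - 1\<close>
  variables.\<close>

section \<open>Exponent vectors and their upper shadow\<close>

definition exps :: "nat \<Rightarrow> nat \<Rightarrow> (nat \<Rightarrow> nat) set" where
  "exps n d = {f. (\<forall>x\<ge>n. f x = 0) \<and> (\<Sum>x<n. f x) = d}"

definition incr :: "nat \<Rightarrow> (nat \<Rightarrow> nat) \<Rightarrow> nat \<Rightarrow> nat" where
  "incr l f = f(l := Suc (f l))"

definition up_shadow :: "nat \<Rightarrow> (nat \<Rightarrow> nat) set \<Rightarrow> (nat \<Rightarrow> nat) set" where
  "up_shadow n M = (\<Union>l<n. incr l ` M)"

lemma incr_apply: "incr l f x = (if x = l then Suc (f x) else f x)"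
  by (simp add: incr_def)

lemma inj_incr: "inj (incr l)"
proof (rule injI)
  fix f g assume "incr l f = incr l g"
  then have "incr l f x = incr l g x" for x by simp
  then show "f = g"
    by (metis Suc_inject ext incr_apply)
qed

lemma incr_commute: "incr l (incr l' f) = incr l' (incr l f)"
  by (auto simp: incr_def fun_eq_iff)

lemma sum_lessThan_fun_upd:
  fixes f :: "nat \<Rightarrow> nat"
  assumes "l < n"
  shows "(\<Sum>x<n. (f(l := v)) x) + f l = (\<Sum>x<n. f x) + v"
proof -
  have "(\<Sum>x<n. (f(l := v)) x) = v + (\<Sum>x\<in>{..<n}-{l}. f x)"
    using assms by (simp add: sum.remove[of _ l])
  moreover have "(\<Sum>x<n. f x) = f l + (\<Sum>x\<in>{..<n}-{l}. f x)"
    using assms by (simp add: sum.remove[of _ l])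
  ultimately show ?thesis by simp
qed

lemma incr_in_exps_iff:
  assumes "l < n"
  shows "incr l f \<in> exps n (Suc d) \<longleftrightarrow> f \<in> exps n d"
proof -
  have "(\<forall>x\<ge>n. incr l f x = 0) \<longleftrightarrow> (\<forall>x\<ge>n. f x = 0)"
    using assms by (auto simp: incr_apply)
  moreover have "(\<Sum>x<n. incr l f x) = Suc (\<Sum>x<n. f x)"
    using sum_lessThan_fun_upd[OF assms, of f "Suc (f l)"] by (simp add: incr_def)
  ultimately show ?thesis by (simp add: exps_def)
qed

lemma up_shadow_subset_exps: "M \<subseteq> exps n d \<Longrightarrow> up_shadow n M \<subseteq> exps n (Suc d)"
  by (auto simp: up_shadow_def incr_in_exps_iff)

lemma finite_exps: "finite (exps n d)"
proof -
  have "exps n d \<subseteq> {f. \<forall>x. (x \<in> {..<n} \<longrightarrow> f x \<in> {..d}) \<and> (x \<notin> {..<n} \<longrightarrow> f x = 0)}"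
  proof (intro subsetI CollectI allI conjI impI)
    fix f x assume f: "f \<in> exps n d"
    { assume "x \<in> {..<n}"
      then have "f x \<le> (\<Sum>x<n. f x)" by (intro member_le_sum) auto
      then show "f x \<in> {..d}" using f by (simp add: exps_def) }
    { assume "x \<notin> {..<n}" then show "f x = 0" using f by (simp add: exps_def not_less) }
  qed
  then show ?thesis by (rule finite_subset) (intro finite_set_of_finite_funs; simp)
qed

lemma finite_subset_exps: "M \<subseteq> exps n d \<Longrightarrow> finite M"
  using finite_exps finite_subset by blast

lemma exps_0_Suc: "exps 0 (Suc d) = {}"
  by (simp add: exps_def)

lemma exps_0_right: "exps n 0 = {\<lambda>_. 0}"
proof (intro equalityI subsetI)
  fix f assume "f \<in> exps n 0"
  then show "f \<in> {\<lambda>_. 0}"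
    unfolding exps_def by (auto simp: fun_eq_iff) (metis lessThan_iff not_le)
qed (auto simp: exps_def)

lemma exps_Suc_last_zero: "{f \<in> exps (Suc n) d. f n = 0} = exps n d"
proof -
  have "((\<forall>x\<ge>Suc n. f x = 0) \<and> f n = 0) \<longleftrightarrow> (\<forall>x\<ge>n. f x = 0)" for f :: "nat \<Rightarrow> nat"
    using le_Suc_eq by auto
  then show ?thesis by (auto simp: exps_def)
qed

lemma exps_Suc_Suc:
  "exps (Suc n) (Suc d) = exps n (Suc d) \<union> incr n ` exps (Suc n) d"
proof (intro equalityI subsetI)
  fix f assume f: "f \<in> exps (Suc n) (Suc d)"
  show "f \<in> exps n (Suc d) \<union> incr n ` exps (Suc n) d"
  proof (cases "f n = 0")
    case True
    then show ?thesis using f exps_Suc_last_zero by blast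
  next
    case False
    then have "f = incr n (f(n := f n - 1))"
      by (auto simp: incr_def)
    moreover have "f(n := f n - 1) \<in> exps (Suc n) d"
      using f calculation incr_in_exps_iff[of n "Suc n" "f(n := f n - 1)" d] by simp
    ultimately show ?thesis by blast
  qed
next
  fix f assume "f \<in> exps n (Suc d) \<union> incr n ` exps (Suc n) d"
  then show "f \<in> exps (Suc n) (Suc d)"
    using exps_Suc_last_zero[of n "Suc d"] incr_in_exps_iff[of n "Suc n"] by blast
qed

lemma card_exps_Suc_Suc:
  "card (exps (Suc n) (Suc d)) = card (exps (Suc n) d) + card (exps n (Suc d))"
proof -
  have "exps n (Suc d) \<inter> incr n ` exps (Suc n) d = {}"
    by (auto simp: exps_def incr_def)
  then show ?thesis
    by (simp add: exps_Suc_Suc card_Un_disjoint finite_exps card_image inj_on_subset[OF inj_incr])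
qed

section \<open>Compression\<close>

definition merge :: "nat \<Rightarrow> nat \<Rightarrow> (nat \<Rightarrow> nat) \<Rightarrow> nat \<Rightarrow> nat" where
  "merge i j f = f(j := 0, i := f i + f j)"

definition unmerge :: "nat \<Rightarrow> nat \<Rightarrow> (nat \<Rightarrow> nat) \<Rightarrow> nat \<Rightarrow> nat \<Rightarrow> nat" where
  "unmerge i j K b = K(j := b, i := K i - b)"

definition fibre :: "nat \<Rightarrow> nat \<Rightarrow> (nat \<Rightarrow> nat) set \<Rightarrow> (nat \<Rightarrow> nat) \<Rightarrow> (nat \<Rightarrow> nat) set" where
  "fibre i j M K = {f \<in> M. merge i j f = K}"

text \<open>Within every fibre of \<open>merge i j\<close> (all exponents except those of \<open>i\<close> and \<open>j\<close>, and
  their sum, fixed), the compression keeps the number of elements but takes those with the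
  smallest exponents of \<open>j\<close>.\<close>

definition compress :: "nat \<Rightarrow> nat \<Rightarrow> nat \<Rightarrow> nat \<Rightarrow> (nat \<Rightarrow> nat) set \<Rightarrow> (nat \<Rightarrow> nat) set" where
  "compress N d i j M = {f \<in> exps N d. f j < card (fibre i j M (merge i j f))}"

lemma sum_over_fibres:
  "finite M \<Longrightarrow> sum h M = (\<Sum>K\<in>merge i j ` M. sum h (fibre i j M K))"
  unfolding fibre_def by (rule sum.image_gen)

lemma card_over_fibres:
  "finite M \<Longrightarrow> card M = (\<Sum>K\<in>merge i j ` M. card (fibre i j M K))"
  using sum_over_fibres[of M "\<lambda>_. 1::nat" i j] by (simp only: card_eq_sum)

lemma compress_subset_exps: "compress N d i j M \<subseteq> exps N d"
  by (auto simp: compress_def)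

lemma sum_lessThan_card_le:
  fixes B :: "nat set"
  assumes "finite B"
  shows "\<Sum>{..<card B} \<le> \<Sum>B"
  using assms
proof (induction B rule: finite_linorder_max_induct)
  case (insert b A)
  then have "card A \<le> b"
    using card_mono[of "{..<b}" A] by fastforce
  moreover have "b \<notin> A"
    using insert by auto
  ultimately show ?case
    using insert by simp
qed simp

lemma sum_lessThan_card_less:
  fixes B :: "nat set"
  assumes "finite B" and "B \<noteq> {..<card B}"
  shows "\<Sum>{..<card B} < \<Sum>B"
  using assms
proof (induction B rule: finite_linorder_max_induct)
  case (insert b A)
  have b_notin: "b \<notin> A" and card_insert: "card (insert b A) = Suc (card A)"
    using insert by auto
  have "card A \<le> b"
    using insert card_mono[of "{..<b}" A] by fastforce
  moreover have "\<Sum>{..<card A} < \<Sum>A \<or> card A < b"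
  proof (cases "A = {..<card A}")
    case True
    then have "b \<noteq> card A"
      using insert.prems card_insert by (auto simp: lessThan_Suc)
    with \<open>card A \<le> b\<close> show ?thesis by simp
  next
    case False
    with insert.IH show ?thesis by simp
  qed
  moreover have "\<Sum>{..<card A} \<le> \<Sum>A"
    using insert.hyps(1) by (rule sum_lessThan_card_le)
  ultimately show ?case
    using insert.hyps b_notin card_insert by auto
qed simp

lemma Union_fibres: "(\<Union>K\<in>merge i j ` M. fibre i j M K) = M"
  by (auto simp: fibre_def)

context
  fixes N i j :: nat
  assumes ij: "i \<noteq> j" "i < N" "j < N"
begin

lemma merge_apply_j: "merge i j f j = 0"
  and merge_apply_i: "merge i j f i = f i + f j"
  using ij by (auto simp: merge_def)

lemma unmerge_apply_j: "unmerge i j K b j = b"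
  using ij by (simp add: unmerge_def)

lemma unmerge_merge: "unmerge i j (merge i j f) (f j) = f"
  using ij by (auto simp: merge_def unmerge_def fun_eq_iff)

lemma merge_unmerge: "K j = 0 \<Longrightarrow> b \<le> K i \<Longrightarrow> merge i j (unmerge i j K b) = K"
  using ij by (auto simp: merge_def unmerge_def fun_eq_iff)

lemma inj_unmerge: "inj (unmerge i j K)"
  by (rule injI) (metis unmerge_apply_j)

lemma merge_incr: "merge i j (incr l f) = incr (if l = j then i else l) (merge i j f)"
  using ij by (auto simp: merge_def incr_def fun_eq_iff)

lemma merge_in_exps_iff: "merge i j f \<in> exps N d \<longleftrightarrow> f \<in> exps N d"
proof -
  have split: "(\<Sum>x<N. g x) = g i + g j + (\<Sum>x\<in>{..<N}-{i,j}. g x)" for g :: "nat \<Rightarrow> nat"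
    using ij by (simp add: sum.subset_diff[of "{i,j}" "{..<N}"])
  have "(\<Sum>x\<in>{..<N}-{i,j}. merge i j f x) = (\<Sum>x\<in>{..<N}-{i,j}. f x)"
    by (intro sum.cong) (auto simp: merge_def)
  then have "(\<Sum>x<N. merge i j f x) = (\<Sum>x<N. f x)"
    by (simp add: split[of "merge i j f"] split[of f] merge_apply_i merge_apply_j)
  moreover have "(\<forall>x\<ge>N. merge i j f x = 0) \<longleftrightarrow> (\<forall>x\<ge>N. f x = 0)"
    using ij by (auto simp: merge_def)
  ultimately show ?thesis by (simp add: exps_def)
qed

lemma fibre_eq_unmerge_image: "fibre i j M K = unmerge i j K ` (\<lambda>f. f j) ` fibre i j M K"
proof (intro equalityI subsetI)
  fix f assume "f \<in> fibre i j M K"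
  then show "f \<in> unmerge i j K ` (\<lambda>f. f j) ` fibre i j M K"
    using unmerge_merge[of f] by (force simp: fibre_def)
next
  fix f assume "f \<in> unmerge i j K ` (\<lambda>f. f j) ` fibre i j M K"
  then show "f \<in> fibre i j M K"
    using unmerge_merge by (auto simp: fibre_def)
qed

lemma inj_on_fibre_apply_j: "inj_on (\<lambda>f. f j) (fibre i j M K)"
proof (rule inj_onI)
  fix f g assume "f \<in> fibre i j M K" "g \<in> fibre i j M K" and fg: "f j = g j"
  then have "merge i j f = merge i j g"
    by (simp add: fibre_def)
  with fg show "f = g"
    by (metis unmerge_merge)
qed

lemma card_fibre_le: "card (fibre i j M K) \<le> Suc (K i)"
proof -
  have "(\<lambda>f. f j) ` fibre i j M K \<subseteq> {..K i}"
    by (auto simp: fibre_def merge_apply_i)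
  then have "card ((\<lambda>f. f j) ` fibre i j M K) \<le> Suc (K i)"
    using card_mono[of "{..K i}"] by fastforce
  then show ?thesis
    by (simp add: card_image inj_on_fibre_apply_j)
qed

lemma fibre_compress:
  assumes M: "M \<subseteq> exps N d"
  shows "fibre i j (compress N d i j M) K = unmerge i j K ` {..<card (fibre i j M K)}"
proof (intro equalityI subsetI)
  fix f assume "f \<in> fibre i j (compress N d i j M) K"
  then have "merge i j f = K" "f j < card (fibre i j M K)"
    by (auto simp: fibre_def compress_def)
  then show "f \<in> unmerge i j K ` {..<card (fibre i j M K)}"
    using unmerge_merge[of f] by force
next
  fix f assume "f \<in> unmerge i j K ` {..<card (fibre i j M K)}"
  then obtain b where b: "b < card (fibre i j M K)" and f: "f = unmerge i j K b"
    by auto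
  then have "fibre i j M K \<noteq> {}"
    by auto
  then obtain g where "g \<in> M" "merge i j g = K"
    by (auto simp: fibre_def)
  then have K: "K \<in> exps N d" "K j = 0"
    using M merge_in_exps_iff merge_apply_j by auto
  have "b \<le> K i"
    using b card_fibre_le[of M K] by simp
  then have "merge i j f = K"
    using K f merge_unmerge by simp
  moreover have "f \<in> exps N d"
    using K(1) calculation merge_in_exps_iff[of f d] by simp
  ultimately show "f \<in> fibre i j (compress N d i j M) K"
    using b f unmerge_apply_j by (simp add: fibre_def compress_def)
qed

lemma card_fibre_compress:
  "M \<subseteq> exps N d \<Longrightarrow> card (fibre i j (compress N d i j M) K) = card (fibre i j M K)"
  by (simp add: fibre_compress card_image inj_on_subset[OF inj_unmerge])

lemma merge_image_compress:
  assumes M: "M \<subseteq> exps N d"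
  shows "merge i j ` compress N d i j M = merge i j ` M"
proof -
  have image_iff: "K \<in> merge i j ` A \<longleftrightarrow> fibre i j A K \<noteq> {}" for A K
    by (auto simp: fibre_def)
  have nonempty_iff: "fibre i j (compress N d i j M) K \<noteq> {} \<longleftrightarrow> fibre i j M K \<noteq> {}" for K
  proof -
    have fin: "finite (fibre i j A K)" if "A \<subseteq> exps N d" for A
      using that finite_subset_exps by (auto simp: fibre_def intro: finite_subset)
    show ?thesis
      using card_fibre_compress[OF M, of K] card_0_eq[OF fin[OF M]]
        card_0_eq[OF fin[OF compress_subset_exps[of N d i j M]]] by simp
  qed
  show ?thesis
    by (rule set_eqI) (simp only: image_iff nonempty_iff)
qed

lemma card_compress:
  assumes M: "M \<subseteq> exps N d"
  shows "card (compress N d i j M) = card M"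
proof -
  have "finite (compress N d i j M)"
    by (rule finite_subset_exps[OF compress_subset_exps])
  then have "card (compress N d i j M) =
      (\<Sum>K\<in>merge i j ` compress N d i j M. card (fibre i j (compress N d i j M) K))"
    by (rule card_over_fibres)
  also have "\<dots> = (\<Sum>K\<in>merge i j ` M. card (fibre i j (compress N d i j M) K))"
    by (simp only: merge_image_compress[OF M])
  also have "\<dots> = (\<Sum>K\<in>merge i j ` M. card (fibre i j M K))"
    using M by (simp add: card_fibre_compress)
  also have "\<dots> = card M"
    by (rule card_over_fibres[OF finite_subset_exps[OF M], symmetric])
  finally show ?thesis .
qed

lemma incr_mem_compress_fixpoint:
  assumes fixed: "compress N d i j M = M" and g: "incr j g \<in> M"
  shows "incr i g \<in> M"
proof -
  have f: "incr j g \<in> compress N d i j M"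
    using fixed g by simp
  have merge_eq: "merge i j (incr i g) = merge i j (incr j g)"
    using ij by (simp add: merge_incr)
  then have "incr i g \<in> exps N d"
    using f merge_in_exps_iff[of "incr i g" d] merge_in_exps_iff[of "incr j g" d]
    by (simp add: compress_def)
  moreover have "incr i g j < card (fibre i j M (merge i j (incr i g)))"
    using f ij merge_eq by (simp add: compress_def incr_apply)
  ultimately have "incr i g \<in> compress N d i j M"
    by (simp add: compress_def)
  with fixed show ?thesis by simp
qed

lemma sum_apply_j_compress:
  assumes M: "M \<subseteq> exps N d"
  shows "(\<Sum>f\<in>compress N d i j M. f j) = (\<Sum>K\<in>merge i j ` M. \<Sum>{..<card (fibre i j M K)})"
proof -
  let ?C = "compress N d i j M"
  have "(\<Sum>f\<in>?C. f j) = (\<Sum>K\<in>merge i j ` ?C. \<Sum>f\<in>fibre i j ?C K. f j)"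
    by (rule sum_over_fibres[OF finite_subset_exps[OF compress_subset_exps]])
  also have "\<dots> = (\<Sum>K\<in>merge i j ` M. \<Sum>f\<in>fibre i j ?C K. f j)"
    by (simp only: merge_image_compress[OF M])
  also have "\<dots> = (\<Sum>K\<in>merge i j ` M. \<Sum>{..<card (fibre i j M K)})"
    by (simp add: fibre_compress[OF M] sum.reindex inj_on_subset[OF inj_unmerge] unmerge_apply_j)
  finally show ?thesis .
qed

lemma sum_apply_j_eq_sum_fibres:
  "finite M \<Longrightarrow> (\<Sum>f\<in>M. f j) = (\<Sum>K\<in>merge i j ` M. \<Sum>((\<lambda>f. f j) ` fibre i j M K))"
  by (simp add: sum_over_fibres[of M _ i j] sum.reindex inj_on_fibre_apply_j)

lemma fibre_compress_eq:
  assumes "M \<subseteq> exps N d" and "(\<lambda>f. f j) ` fibre i j M K = {..<card (fibre i j M K)}"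
  shows "fibre i j (compress N d i j M) K = fibre i j M K"
  using assms fibre_eq_unmerge_image[of M K] by (simp add: fibre_compress)

lemma sum_compress_less:
  assumes M: "M \<subseteq> exps N d" and ne: "compress N d i j M \<noteq> M"
  shows "(\<Sum>f\<in>compress N d i j M. f j) < (\<Sum>f\<in>M. f j)"
proof -
  let ?C = "compress N d i j M"
  define vals where "vals K = (\<lambda>f. f j) ` fibre i j M K" for K
  have card_vals: "card (vals K) = card (fibre i j M K)" for K
    by (simp add: vals_def card_image inj_on_fibre_apply_j)
  have fin_vals: "finite (vals K)" for K
    using finite_subset_exps[OF M] by (simp add: vals_def fibre_def)
  obtain K where K: "K \<in> merge i j ` M" "fibre i j ?C K \<noteq> fibre i j M K"
  proof (rule ccontr)
    assume "\<not> thesis"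
    with that have "fibre i j ?C K = fibre i j M K" if "K \<in> merge i j ` M" for K
      using that by blast
    then have "?C = M"
      using Union_fibres[of i j ?C] Union_fibres[of i j M] merge_image_compress[OF M] by simp
    with ne show False ..
  qed
  have "vals K \<noteq> {..<card (fibre i j M K)}"
  proof
    assume "vals K = {..<card (fibre i j M K)}"
    with fibre_compress_eq[OF M] K(2) show False
      by (simp add: vals_def)
  qed
  then have "vals K \<noteq> {..<card (vals K)}"
    by (simp add: card_vals)
  then have less: "\<Sum>{..<card (fibre i j M K)} < \<Sum>(vals K)"
    using sum_lessThan_card_less[OF fin_vals] by (simp only: card_vals)
  have le: "\<Sum>{..<card (fibre i j M K')} \<le> \<Sum>(vals K')" for K'
    using sum_lessThan_card_le[OF fin_vals, of K'] by (simp only: card_vals)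
  have "(\<Sum>K\<in>merge i j ` M. \<Sum>{..<card (fibre i j M K)}) < (\<Sum>K\<in>merge i j ` M. \<Sum>(vals K))"
    using K(1) finite_subset_exps[OF M] le less by (intro sum_strict_mono_ex1) auto
  then show ?thesis
    using sum_apply_j_compress[OF M] sum_apply_j_eq_sum_fibres[OF finite_subset_exps[OF M]]
    by (simp only: vals_def)
qed

lemma card_fibre_le_card_fibre_up_shadow:
  assumes M: "M \<subseteq> exps N d" and l: "l < N" "l \<noteq> j"
  shows "card (fibre i j M K) \<le> card (fibre i j (up_shadow N M) (incr l K))"
proof -
  have "incr l ` fibre i j M K \<subseteq> fibre i j (up_shadow N M) (incr l K)"
    using l by (auto simp: fibre_def up_shadow_def merge_incr)
  moreover have "finite (fibre i j (up_shadow N M) (incr l K))"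
    using finite_subset_exps[OF up_shadow_subset_exps[OF M]] by (simp add: fibre_def)
  ultimately have "card (incr l ` fibre i j M K) \<le> card (fibre i j (up_shadow N M) (incr l K))"
    by (rule card_mono[rotated])
  then show ?thesis
    by (simp add: card_image inj_on_subset[OF inj_incr])
qed

lemma card_fibre_less_card_fibre_up_shadow:
  assumes M: "M \<subseteq> exps N d" and ne: "fibre i j M K \<noteq> {}"
  shows "card (fibre i j M K) < card (fibre i j (up_shadow N M) (incr i K))"
proof -
  let ?F = "fibre i j M K"
  have fin: "finite ?F"
    using finite_subset_exps[OF M] by (simp add: fibre_def)
  have "Max ((\<lambda>f. f j) ` ?F) \<in> (\<lambda>f. f j) ` ?F"
    using fin ne by (intro Max_in) auto
  then obtain g where g: "g \<in> ?F" and g_j: "g j = Max ((\<lambda>f. f j) ` ?F)"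
    by auto
  have g_max: "f j \<le> g j" if "f \<in> ?F" for f
    using fin that by (simp add: g_j)
  have new: "incr j g \<notin> incr i ` ?F"
  proof
    assume "incr j g \<in> incr i ` ?F"
    then obtain f where f: "f \<in> ?F" and "incr j g j = incr i f j"
      by auto
    with ij have "Suc (g j) = f j"
      by (simp add: incr_apply)
    with g_max[OF f] show False
      by simp
  qed
  have "insert (incr j g) (incr i ` ?F) \<subseteq> fibre i j (up_shadow N M) (incr i K)"
    using g ij by (auto simp: fibre_def up_shadow_def merge_incr)
  moreover have "finite (fibre i j (up_shadow N M) (incr i K))"
    using finite_subset_exps[OF up_shadow_subset_exps[OF M]] by (simp add: fibre_def)
  ultimately have "card (insert (incr j g) (incr i ` ?F)) \<le> card (fibre i j (up_shadow N M) (incr i K))"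
    by (rule card_mono[rotated])
  moreover have "card (insert (incr j g) (incr i ` ?F)) = Suc (card ?F)"
    using new fin by (simp add: card_image inj_on_subset[OF inj_incr])
  ultimately show ?thesis by simp
qed

lemma up_shadow_compress_subset:
  assumes M: "M \<subseteq> exps N d"
  shows "up_shadow N (compress N d i j M) \<subseteq> compress N (Suc d) i j (up_shadow N M)"
proof
  fix y assume "y \<in> up_shadow N (compress N d i j M)"
  then obtain l f where l: "l < N" and f: "f \<in> compress N d i j M" and y: "y = incr l f"
    by (auto simp: up_shadow_def)
  have f_j: "f j < card (fibre i j M (merge i j f))"
    using f by (simp add: compress_def)
  have "y j < card (fibre i j (up_shadow N M) (merge i j y))"
  proof (cases "l = j")
    case True
    have "fibre i j M (merge i j f) \<noteq> {}"
      using f_j by auto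
    then have "card (fibre i j M (merge i j f)) < card (fibre i j (up_shadow N M) (merge i j y))"
      using card_fibre_less_card_fibre_up_shadow[OF M] True y by (simp add: merge_incr)
    moreover have "y j = Suc (f j)"
      using True y by (simp add: incr_apply)
    ultimately show ?thesis
      using f_j by simp
  next
    case False
    then have "card (fibre i j M (merge i j f)) \<le> card (fibre i j (up_shadow N M) (merge i j y))"
      using card_fibre_le_card_fibre_up_shadow[OF M l False] y by (simp add: merge_incr)
    moreover have "y j = f j"
      using False y by (simp add: incr_apply)
    ultimately show ?thesis
      using f_j by simp
  qed
  moreover have "y \<in> exps N (Suc d)"
    using f incr_in_exps_iff[OF l] y by (simp add: compress_def)
  ultimately show "y \<in> compress N (Suc d) i j (up_shadow N M)"
    by (simp add: compress_def)
qed

lemma card_up_shadow_compress_le: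
  assumes M: "M \<subseteq> exps N d"
  shows "card (up_shadow N (compress N d i j M)) \<le> card (up_shadow N M)"
proof -
  have "card (up_shadow N (compress N d i j M)) \<le> card (compress N (Suc d) i j (up_shadow N M))"
    by (intro card_mono up_shadow_compress_subset[OF M] finite_subset_exps[OF compress_subset_exps])
  also have "\<dots> = card (up_shadow N M)"
    by (rule card_compress[OF up_shadow_subset_exps[OF M]])
  finally show ?thesis .
qed

end

section \<open>A Macaulay-type bound for the upper shadow\<close>

definition last_var_stable :: "nat \<Rightarrow> (nat \<Rightarrow> nat) set \<Rightarrow> bool" where
  "last_var_stable n M \<longleftrightarrow> (\<forall>g. \<forall>i<n. incr n g \<in> M \<longrightarrow> incr i g \<in> M)"

lemma exists_last_var_stable:
  assumes M: "M \<subseteq> exps (Suc n) d"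
  obtains M' where "M' \<subseteq> exps (Suc n) d" "card M' = card M"
    "card (up_shadow (Suc n) M') \<le> card (up_shadow (Suc n) M)" "last_var_stable n M'"
proof -
  let ?P = "\<lambda>M'. M' \<subseteq> exps (Suc n) d \<and> card M' = card M
    \<and> card (up_shadow (Suc n) M') \<le> card (up_shadow (Suc n) M)"
  txt \<open>A set of minimal weight \<open>\<Sum>f\<in>M'. f n\<close> is fixed by all compressions towards \<open>n\<close>.\<close>
  obtain M' where P: "?P M'" and least: "\<And>M''. ?P M'' \<Longrightarrow> (\<Sum>f\<in>M'. f n) \<le> (\<Sum>f\<in>M''. f n)"
    using ex_has_least_nat[of ?P M "\<lambda>M'. \<Sum>f\<in>M'. f n"] M by blast
  have "last_var_stable n M'"
    unfolding last_var_stable_def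
  proof (intro allI impI)
    fix g i assume i: "i < n" and g: "incr n g \<in> M'"
    have ij: "i \<noteq> n" "i < Suc n" "n < Suc n"
      using i by auto
    have M': "M' \<subseteq> exps (Suc n) d"
      using P by simp
    have "?P (compress (Suc n) d i n M')"
      using P compress_subset_exps card_compress[OF ij M'] card_up_shadow_compress_le[OF ij M']
      by auto
    then have "\<not> (\<Sum>f\<in>compress (Suc n) d i n M'. f n) < (\<Sum>f\<in>M'. f n)"
      using least not_le by blast
    then have "compress (Suc n) d i n M' = M'"
      using sum_compress_less[OF ij M'] by blast
    then show "incr i g \<in> M'"
      using incr_mem_compress_fixpoint[OF ij _ g] by blast
  qed
  with P that show ?thesis by blast
qed

lemma last_var_stable_exists_last_zero:
  assumes st: "last_var_stable n M" and n: "0 < n" and f: "f \<in> M"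
  shows "\<exists>g\<in>M. g n = 0"
  using f
proof (induction "f n" arbitrary: f)
  case 0
  then show ?case by auto
next
  case (Suc c)
  have "incr n (f(n := c)) = f"
    unfolding incr_def using Suc.hyps(2) by simp
  with Suc.prems have "incr n (f(n := c)) \<in> M"
    by simp
  then have "incr 0 (f(n := c)) \<in> M"
    using st n by (simp add: last_var_stable_def)
  moreover have "incr 0 (f(n := c)) n = c"
    using n by (simp add: incr_apply)
  ultimately show ?case
    using Suc.hyps(1)[of "incr 0 (f(n := c))"] by simp
qed

lemma last_var_stable_incr_preimage:
  "last_var_stable n M \<Longrightarrow> last_var_stable n {g. incr n g \<in> M}"
  by (simp add: last_var_stable_def incr_commute)

lemma up_shadow_incr_preimage_subset:
  assumes "last_var_stable n M"
  shows "up_shadow n {g. incr n g \<in> M \<and> g n = 0} \<subseteq> {f \<in> M. f n = 0}"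
  using assms by (auto simp: up_shadow_def last_var_stable_def incr_apply)

lemma card_incr_preimage: "card {g. incr n g \<in> M} = card {f \<in> M. f n \<noteq> 0}"
proof -
  have image: "incr n ` {g. incr n g \<in> M} = {f \<in> M. f n \<noteq> 0}"
  proof (intro equalityI subsetI)
    fix f assume "f \<in> {f \<in> M. f n \<noteq> 0}"
    then have "f = incr n (f(n := f n - 1))" "f \<in> M"
      by (auto simp: incr_def)
    then show "f \<in> incr n ` {g. incr n g \<in> M}"
      by (intro image_eqI[of _ _ "f(n := f n - 1)"]) auto
  qed (auto simp: incr_apply)
  have "card (incr n ` {g. incr n g \<in> M}) = card {g. incr n g \<in> M}"
    by (rule card_image[OF inj_on_subset[OF inj_incr subset_UNIV]])
  with image show ?thesis
    by simp
qed

lemma card_add_card_up_shadow_last_zero: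
  assumes M: "M \<subseteq> exps (Suc n) d"
  shows "card M + card (up_shadow n {f \<in> M. f n = 0}) \<le> card (up_shadow (Suc n) M)"
proof -
  let ?A = "incr n ` M" and ?B = "up_shadow n {f \<in> M. f n = 0}"
  have "?B \<subseteq> up_shadow (Suc n) M"
    unfolding up_shadow_def by (rule UN_mono) auto
  then have sub: "?A \<union> ?B \<subseteq> up_shadow (Suc n) M"
    by (auto simp: up_shadow_def)
  have "f n \<noteq> 0" if "f \<in> ?A" for f
    using that by (auto simp: incr_apply)
  moreover have "f n = 0" if "f \<in> ?B" for f
    using that by (auto simp: up_shadow_def incr_apply)
  ultimately have disj: "?A \<inter> ?B = {}"
    by blast
  have fin: "finite (up_shadow (Suc n) M)"
    by (rule finite_subset_exps[OF up_shadow_subset_exps[OF M]])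
  have "card M + card ?B = card (?A \<union> ?B)"
    using disj fin sub finite_subset
    by (subst card_Un_disjoint) (auto simp: card_image inj_on_subset[OF inj_incr])
  also have "\<dots> \<le> card (up_shadow (Suc n) M)"
    by (rule card_mono[OF fin sub])
  finally show ?thesis .
qed

text \<open>The first hypothesis is the induction hypothesis of \<open>card_exps_Suc_le_card_up_shadow\<close>.\<close>

lemma card_exps_le_card_last_zero:
  assumes bound_n: "\<And>d k M. M \<subseteq> exps n d \<Longrightarrow> k \<le> d \<Longrightarrow> card (exps n k) \<le> card M \<Longrightarrow>
      card (exps n (Suc k)) \<le> card (up_shadow n M)"
    and n: "0 < n"
  shows "M \<subseteq> exps (Suc n) d \<Longrightarrow> last_var_stable n M \<Longrightarrow> k \<le> d \<Longrightarrow> card (exps (Suc n) k) \<le> card M \<Longrightarrow>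
    card (exps n k) \<le> card {f \<in> M. f n = 0}"
proof (induction k arbitrary: d M)
  case 0
  then have "M \<noteq> {}"
    by (auto simp: exps_0_right)
  then obtain g where "g \<in> M" "g n = 0"
    using last_var_stable_exists_last_zero[OF \<open>last_var_stable n M\<close> n] by blast
  moreover have "finite M"
    using "0.prems"(1) by (rule finite_subset_exps)
  ultimately show ?case
    by (auto simp: exps_0_right Suc_le_eq card_gt_0_iff)
next
  case (Suc k)
  obtain d' where d: "d = Suc d'"
    using Suc.prems(3) by (cases d) auto
  let ?M0 = "{f \<in> M. f n = 0}" and ?P = "{g. incr n g \<in> M}"
  have fin: "finite M"
    using Suc.prems(1) by (rule finite_subset_exps)
  have "card M = card ?M0 + card {f \<in> M. f n \<noteq> 0}"
    using fin by (subst card_Un_disjoint[symmetric]) (auto intro: arg_cong[where f = card])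
  then have card_M: "card M = card ?M0 + card ?P"
    by (simp add: card_incr_preimage)
  show ?case
  proof (cases "card (exps (Suc n) k) \<le> card ?P")
    case True
    have P: "?P \<subseteq> exps (Suc n) d'"
      using Suc.prems(1) incr_in_exps_iff[of n "Suc n"] d by auto
    have "card (exps n k) \<le> card {g \<in> ?P. g n = 0}"
      using Suc.IH[OF P last_var_stable_incr_preimage[OF Suc.prems(2)]] Suc.prems(3) True d by simp
    moreover have "{g \<in> ?P. g n = 0} \<subseteq> exps n d'"
      using P exps_Suc_last_zero[of n d'] by blast
    ultimately have "card (exps n (Suc k)) \<le> card (up_shadow n {g \<in> ?P. g n = 0})"
      using bound_n Suc.prems(3) d by simp
    also have "\<dots> \<le> card ?M0"
      using up_shadow_incr_preimage_subset[OF Suc.prems(2)] fin by (intro card_mono) auto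
    finally show ?thesis .
  next
    case False
    then show ?thesis
      using Suc.prems(4) card_M card_exps_Suc_Suc[of n k] by simp
  qed
qed

theorem card_exps_Suc_le_card_up_shadow:
  "M \<subseteq> exps n d \<Longrightarrow> k \<le> d \<Longrightarrow> card (exps n k) \<le> card M \<Longrightarrow>
    card (exps n (Suc k)) \<le> card (up_shadow n M)"
proof (induction n arbitrary: d k M)
  case 0
  then show ?case by (simp add: exps_0_Suc)
next
  case (Suc n)
  obtain M' where M': "M' \<subseteq> exps (Suc n) d" "card M' = card M"
      "card (up_shadow (Suc n) M') \<le> card (up_shadow (Suc n) M)" "last_var_stable n M'"
    using exists_last_var_stable[OF Suc.prems(1)] by blast
  have last: "card (exps n (Suc k)) \<le> card (up_shadow n {f \<in> M'. f n = 0})"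
  proof (cases "n = 0")
    case True
    then show ?thesis by (simp add: exps_0_Suc)
  next
    case False
    have M'0: "{f \<in> M'. f n = 0} \<subseteq> exps n d"
      using M'(1) exps_Suc_last_zero[of n d] by blast
    have "card (exps n k) \<le> card {f \<in> M'. f n = 0}"
      using card_exps_le_card_last_zero[OF Suc.IH] False M'(1,2,4) Suc.prems(2,3) by simp
    then show ?thesis
      using Suc.IH[OF M'0 Suc.prems(2)] by simp
  qed
  have "card (exps (Suc n) (Suc k)) = card (exps (Suc n) k) + card (exps n (Suc k))"
    by (rule card_exps_Suc_Suc)
  also have "\<dots> \<le> card M' + card (up_shadow n {f \<in> M'. f n = 0})"
    using Suc.prems(3) M'(2) last by simp
  also have "\<dots> \<le> card (up_shadow (Suc n) M')"
    by (rule card_add_card_up_shadow_last_zero[OF M'(1)])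
  also have "\<dots> \<le> card (up_shadow (Suc n) M)"
    by (rule M'(3))
  finally show ?case .
qed

section \<open>Leading monomials\<close>

lemma lookup_cscale: "Poly_Mapping.lookup (cscale c p) m = c * Poly_Mapping.lookup p m"
  by (simp add: cscale_def Poly_Mapping.map.rep_eq when_def)

interpretation cs: vector_space cscale
  by unfold_locales (auto intro!: poly_mapping_eqI simp: lookup_cscale lookup_add algebra_simps)

lemma cscale_single: "cscale c (Poly_Mapping.single m 1) = Poly_Mapping.single m c"
  by (rule poly_mapping_eqI) (simp add: lookup_cscale lookup_single when_def)

definition monomials :: "nat \<Rightarrow> nat \<Rightarrow> (nat \<Rightarrow>\<^sub>0 nat) set" where
  "monomials N e = {m. Poly_Mapping.keys m \<subseteq> {..<N} \<and> mdeg m = e}"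

text \<open>Leading monomials are taken with respect to the lexicographic linear order on exponent
  vectors from \<open>Poly_Mapping\<close>; all that is used is that it is linear and compatible with
  addition.\<close>

definition lead_mon :: "cpoly \<Rightarrow> nat \<Rightarrow>\<^sub>0 nat" where
  "lead_mon f = Max (Poly_Mapping.keys f)"

definition lead_mons :: "cpoly set \<Rightarrow> (nat \<Rightarrow>\<^sub>0 nat) set" where
  "lead_mons V = lead_mon ` (V - {0})"

lemma mdeg_eq_sum:
  assumes "Poly_Mapping.keys m \<subseteq> A" "finite A"
  shows "mdeg m = (\<Sum>i\<in>A. Poly_Mapping.lookup m i)"
  unfolding mdeg_def using assms by (intro sum.mono_neutral_left) (auto simp: in_keys_iff)

lemma mdeg_add: "mdeg (a + b) = mdeg a + mdeg b"
proof -
  let ?A = "Poly_Mapping.keys a \<union> Poly_Mapping.keys b"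
  have "mdeg (a + b) = (\<Sum>i\<in>?A. Poly_Mapping.lookup (a + b) i)"
    using keys_add[of a b] by (intro mdeg_eq_sum) auto
  also have "\<dots> = mdeg a + mdeg b"
    by (simp add: lookup_add sum.distrib mdeg_eq_sum[of a ?A] mdeg_eq_sum[of b ?A])
  finally show ?thesis .
qed

lemma lookup_image_monomials: "Poly_Mapping.lookup ` monomials N e = exps N e"
proof (intro equalityI subsetI)
  fix f assume "f \<in> Poly_Mapping.lookup ` monomials N e"
  then obtain m where m: "m \<in> monomials N e" "f = Poly_Mapping.lookup m"
    by auto
  then show "f \<in> exps N e"
    using mdeg_eq_sum[of m "{..<N}"] by (auto simp: monomials_def exps_def in_keys_iff)
next
  fix f assume f: "f \<in> exps N e"
  then have support: "{x. f x \<noteq> 0} \<subseteq> {..<N}"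
    by (auto simp: exps_def not_less[symmetric])
  then have lookup: "Poly_Mapping.lookup (Abs_poly_mapping f) = f"
    by (simp add: finite_subset)
  with support have keys: "Poly_Mapping.keys (Abs_poly_mapping f) \<subseteq> {..<N}"
    by (auto simp: in_keys_iff)
  then have "Abs_poly_mapping f \<in> monomials N e"
    using f mdeg_eq_sum[OF keys] lookup by (simp add: monomials_def exps_def)
  with lookup show "f \<in> Poly_Mapping.lookup ` monomials N e"
    by (metis image_eqI)
qed

lemma inj_lookup: "inj Poly_Mapping.lookup"
  by (rule injI) simp

lemma finite_monomials: "finite (monomials N e)"
  by (metis lookup_image_monomials finite_exps finite_imageD inj_on_subset[OF inj_lookup subset_UNIV])

lemma keys_subset_monomials: "f \<in> SdW N e \<Longrightarrow> Poly_Mapping.keys f \<subseteq> monomials N e"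
  by (auto simp: SdW_def SymW_def monomials_def)

lemma single_monomial_in_SdW: "m \<in> monomials N e \<Longrightarrow> Poly_Mapping.single m c \<in> SdW N e"
  by (simp add: SdW_def SymW_def monomials_def)

lemma subspace_SdW: "cs.subspace (SdW N e)"
  unfolding cs.subspace_def
proof (intro conjI ballI allI)
  fix x y assume "x \<in> SdW N e" "y \<in> SdW N e"
  then show "x + y \<in> SdW N e"
    using keys_add[of x y] unfolding SdW_def SymW_def by blast
next
  fix c x assume "x \<in> SdW N e"
  then show "cscale c x \<in> SdW N e"
    by (auto simp: SdW_def SymW_def in_keys_iff lookup_cscale)
qed (simp add: SdW_def SymW_def)

lemma subspace_ideal_component:
  assumes "is_ideal N I"
  shows "cs.subspace (I \<inter> SdW N e)"
proof -
  have "cscale c f = Poly_Mapping.single 0 c * f" for c f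
    by (simp add: cscale_def mult_map_scale_conv_mult)
  moreover have "Poly_Mapping.single 0 c \<in> SymW N" for c
    by (simp add: SymW_def)
  ultimately have "cs.subspace I"
    using assms unfolding cs.subspace_def is_ideal_def by auto
  then show ?thesis
    using subspace_SdW cs.subspace_inter by blast
qed

lemma SdW_subset_span_monomials:
  "SdW N e \<subseteq> cs.span ((\<lambda>m. Poly_Mapping.single m 1) ` monomials N e)"
proof
  fix f assume f: "f \<in> SdW N e"
  have "f = (\<Sum>m\<in>Poly_Mapping.keys f. Poly_Mapping.single m (Poly_Mapping.lookup f m))"
    by (rule poly_mapping_eqI) (simp add: lookup_sum lookup_single when_def in_keys_iff)
  also have "\<dots> = (\<Sum>m\<in>Poly_Mapping.keys f. cscale (Poly_Mapping.lookup f m) (Poly_Mapping.single m 1))"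
    by (simp add: cscale_single)
  also have "\<dots> \<in> cs.span ((\<lambda>m. Poly_Mapping.single m 1) ` monomials N e)"
    using keys_subset_monomials[OF f]
    by (intro cs.span_sum cs.span_scale cs.span_base) auto
  finally show "f \<in> cs.span ((\<lambda>m. Poly_Mapping.single m 1) ` monomials N e)" .
qed

lemma lead_mon_in_keys: "f \<noteq> 0 \<Longrightarrow> lead_mon f \<in> Poly_Mapping.keys f"
  unfolding lead_mon_def by (intro Max_in) auto

lemma le_lead_mon: "m \<in> Poly_Mapping.keys f \<Longrightarrow> m \<le> lead_mon f"
  unfolding lead_mon_def by simp

lemma lead_mons_subset_monomials:
  assumes "V \<subseteq> SdW N e"
  shows "lead_mons V \<subseteq> monomials N e"
proof
  fix m assume "m \<in> lead_mons V"
  then obtain f where "f \<in> V" "f \<noteq> 0" "m = lead_mon f"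
    by (auto simp: lead_mons_def)
  with assms show "m \<in> monomials N e"
    using lead_mon_in_keys[of f] keys_subset_monomials[of f] by auto
qed

lemma finite_lead_mons: "V \<subseteq> SdW N e \<Longrightarrow> finite (lead_mons V)"
  by (rule finite_subset[OF lead_mons_subset_monomials finite_monomials])

definition lead_rep :: "cpoly set \<Rightarrow> (nat \<Rightarrow>\<^sub>0 nat) \<Rightarrow> cpoly" where
  "lead_rep V m = (SOME f. f \<in> V \<and> f \<noteq> 0 \<and> lead_mon f = m)"

lemma lead_rep:
  assumes "m \<in> lead_mons V"
  shows "lead_rep V m \<in> V" "lead_rep V m \<noteq> 0" "lead_mon (lead_rep V m) = m"
proof -
  have "\<exists>f. f \<in> V \<and> f \<noteq> 0 \<and> lead_mon f = m"
    using assms by (auto simp: lead_mons_def)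
  then have "lead_rep V m \<in> V \<and> lead_rep V m \<noteq> 0 \<and> lead_mon (lead_rep V m) = m"
    unfolding lead_rep_def by (rule someI_ex)
  then show "lead_rep V m \<in> V" "lead_rep V m \<noteq> 0" "lead_mon (lead_rep V m) = m"
    by auto
qed

lemma cancel_lead_term:
  assumes V: "cs.subspace V" and f: "f \<in> V" "f \<noteq> 0" and h: "h \<in> V" "h \<noteq> 0"
    and lead: "lead_mon h = lead_mon f"
  obtains c where "f - cscale c h \<in> V" "Poly_Mapping.keys (f - cscale c h) \<subseteq> {..<lead_mon f}"
proof
  let ?m = "lead_mon f"
  define c where "c = Poly_Mapping.lookup f ?m / Poly_Mapping.lookup h ?m"
  show "f - cscale c h \<in> V"
    using V f h by (simp add: cs.subspace_diff cs.subspace_scale)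
  have h_m: "Poly_Mapping.lookup h ?m \<noteq> 0"
    using lead_mon_in_keys[OF h(2)] lead by (simp add: in_keys_iff)
  show "Poly_Mapping.keys (f - cscale c h) \<subseteq> {..<?m}"
  proof
    fix k assume k: "k \<in> Poly_Mapping.keys (f - cscale c h)"
    then have "k \<in> Poly_Mapping.keys f \<or> k \<in> Poly_Mapping.keys h"
      by (auto simp: in_keys_iff lookup_minus lookup_cscale)
    then have "k \<le> ?m"
      using le_lead_mon[of k f] le_lead_mon[of k h] lead by auto
    moreover have "k \<noteq> ?m"
      using k h_m by (auto simp: in_keys_iff lookup_minus lookup_cscale c_def)
    ultimately show "k \<in> {..<?m}"
      by simp
  qed
qed

lemma subspace_subset_span_lead_reps:
  assumes V: "cs.subspace V" "V \<subseteq> SdW N e"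
  shows "V \<subseteq> cs.span (lead_rep V ` lead_mons V)"
proof -
  let ?G = "lead_rep V ` lead_mons V" and ?U = "monomials N e"
  have "f \<in> V \<longrightarrow> f \<in> cs.span ?G" for f
  proof (induction f rule: measure_induct_rule[where f = "\<lambda>f. card {k \<in> ?U. k \<le> lead_mon f}"])
    case (less f)
    show ?case
    proof (intro impI)
      assume f: "f \<in> V"
      show "f \<in> cs.span ?G"
      proof (cases "f = 0")
        case False
        let ?m = "lead_mon f"
        have m: "?m \<in> lead_mons V"
          using f False by (auto simp: lead_mons_def)
        obtain c where f': "f - cscale c (lead_rep V ?m) \<in> V"
          and keys: "Poly_Mapping.keys (f - cscale c (lead_rep V ?m)) \<subseteq> {..<?m}"
          using cancel_lead_term[OF V(1) f False lead_rep[OF m]] by blast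
        let ?f' = "f - cscale c (lead_rep V ?m)"
        have "?f' \<in> cs.span ?G"
        proof (cases "?f' = 0")
          case False
          then have "lead_mon ?f' < ?m"
            using keys lead_mon_in_keys[OF False] by auto
          moreover have "?m \<in> ?U"
            using f V(2) lead_mon_in_keys[OF \<open>f \<noteq> 0\<close>] keys_subset_monomials[of f] by auto
          ultimately have "{k \<in> ?U. k \<le> lead_mon ?f'} \<subseteq> {k \<in> ?U. k \<le> ?m}"
            and "?m \<notin> {k \<in> ?U. k \<le> lead_mon ?f'}" "?m \<in> {k \<in> ?U. k \<le> ?m}"
            by auto
          then have "{k \<in> ?U. k \<le> lead_mon ?f'} \<subset> {k \<in> ?U. k \<le> ?m}"
            by blast
          then have "card {k \<in> ?U. k \<le> lead_mon ?f'} < card {k \<in> ?U. k \<le> ?m}"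
            by (rule psubset_card_mono[rotated]) (simp add: finite_monomials)
          then show ?thesis
            using less f' by simp
        qed (simp add: cs.span_zero)
        moreover have "cscale c (lead_rep V ?m) \<in> cs.span ?G"
          using m by (intro cs.span_scale cs.span_base) simp
        ultimately show ?thesis
          using cs.span_add by fastforce
      qed (simp add: cs.span_zero)
    qed
  qed
  then show ?thesis by blast
qed

lemma dim_le_card_lead_mons:
  assumes "cs.subspace V" "V \<subseteq> SdW N e"
  shows "cs.dim V \<le> card (lead_mons V)"
proof -
  have "cs.dim V \<le> card (lead_rep V ` lead_mons V)"
    using finite_lead_mons[OF assms(2)]
    by (intro cs.dim_le_card[OF subspace_subset_span_lead_reps[OF assms]]) simp
  also have "\<dots> \<le> card (lead_mons V)"
    using finite_lead_mons[OF assms(2)] by (rule card_image_le)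
  finally show ?thesis .
qed

lemma keys_cscale_subset: "Poly_Mapping.keys (cscale c f) \<subseteq> Poly_Mapping.keys f"
  by (auto simp: in_keys_iff lookup_cscale)

lemma subspace_keys_below: "cs.subspace {g. Poly_Mapping.keys g \<subseteq> {..<m}}"
  unfolding cs.subspace_def
proof (intro conjI ballI allI)
  fix x y :: cpoly assume "x \<in> {g. Poly_Mapping.keys g \<subseteq> {..<m}}" "y \<in> {g. Poly_Mapping.keys g \<subseteq> {..<m}}"
  then show "x + y \<in> {g. Poly_Mapping.keys g \<subseteq> {..<m}}"
    using keys_add[of x y] by auto
next
  fix c and x :: cpoly assume "x \<in> {g. Poly_Mapping.keys g \<subseteq> {..<m}}"
  then show "cscale c x \<in> {g. Poly_Mapping.keys g \<subseteq> {..<m}}"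
    using keys_cscale_subset[of c x] by auto
qed simp

lemma independent_if_inj_on_lead_mon:
  "finite G \<Longrightarrow> 0 \<notin> G \<Longrightarrow> inj_on lead_mon G \<Longrightarrow> cs.independent G"
proof (induction G rule: finite_ranking_induct[where f = lead_mon])
  case (insert x S)
  show ?case
  proof (cases "x \<in> S")
    case True
    with insert show ?thesis by (simp add: insert_absorb)
  next
    case False
    have "Poly_Mapping.keys y \<subseteq> {..<lead_mon x}" if y: "y \<in> S" for y
    proof -
      have "lead_mon x \<notin> lead_mon ` S"
        using insert.prems(2) False by simp
      with y have "lead_mon y \<noteq> lead_mon x"
        by (metis imageI)
      with insert.hyps(2)[OF y] have "lead_mon y < lead_mon x"
        by simp
      then show ?thesis
        using le_lead_mon[of _ y] by (auto intro: le_less_trans)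
    qed
    then have "S \<subseteq> {g. Poly_Mapping.keys g \<subseteq> {..<lead_mon x}}"
      by blast
    then have "cs.span S \<subseteq> {g. Poly_Mapping.keys g \<subseteq> {..<lead_mon x}}"
      by (rule cs.span_minimal[OF _ subspace_keys_below])
    moreover have "x \<notin> {g. Poly_Mapping.keys g \<subseteq> {..<lead_mon x}}"
      using insert.prems(1) lead_mon_in_keys[of x] by auto
    ultimately have "x \<notin> cs.span S"
      by blast
    moreover have "cs.independent S"
      using insert by (simp add: inj_on_insert)
    ultimately show ?thesis
      by (rule cs.independent_insertI)
  qed
qed (simp add: cs.independent_empty)

lemma card_lead_mons_le_dim:
  assumes V: "cs.subspace V" "V \<subseteq> SdW N e"
  shows "card (lead_mons V) \<le> cs.dim V"
proof -
  let ?G = "lead_rep V ` lead_mons V"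
  have inj: "inj_on (lead_rep V) (lead_mons V)"
    by (rule inj_onI) (metis lead_rep(3))
  have "cs.independent ?G"
  proof (rule independent_if_inj_on_lead_mon)
    show "finite ?G"
      using finite_lead_mons[OF V(2)] by simp
    show "0 \<notin> ?G"
      using lead_rep(2) by fastforce
    show "inj_on lead_mon ?G"
      by (rule inj_onI) (auto simp: lead_rep(3))
  qed
  obtain B where B: "B \<subseteq> V" "cs.independent B" "V \<subseteq> cs.span B" "card B = cs.dim V"
    by (rule cs.basis_exists)
  have "finite B"
    using cs.independent_span_bound[OF finite_imageI[OF finite_monomials] B(2)]
      B(1) V(2) SdW_subset_span_monomials by blast
  moreover have "?G \<subseteq> cs.span B"
    using B(3) lead_rep(1) by blast
  ultimately have "card ?G \<le> card B"
    using cs.independent_span_bound \<open>cs.independent ?G\<close> by blast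
  then show ?thesis
    using B(4) card_image[OF inj] by simp
qed

lemma dim_eq_card_lead_mons:
  "cs.subspace V \<Longrightarrow> V \<subseteq> SdW N e \<Longrightarrow> cs.dim V = card (lead_mons V)"
  using dim_le_card_lead_mons card_lead_mons_le_dim by (metis le_antisym)

section \<open>Components of a homogeneous ideal\<close>

lemma lookup_single_mult_add:
  fixes f :: "'a::cancel_comm_monoid_add \<Rightarrow>\<^sub>0 'b::comm_semiring_1"
  shows "Poly_Mapping.lookup (Poly_Mapping.single a c * f) (a + b) = c * Poly_Mapping.lookup f b"
  by (simp add: lookup_mult lookup_single when_mult mult_when Sum_any.delta Sum_any_right_distrib)

lemma keys_single_mult:
  fixes f :: "'a::cancel_comm_monoid_add \<Rightarrow>\<^sub>0 'b::{comm_semiring_1, semiring_no_zero_divisors}"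
  assumes "c \<noteq> 0"
  shows "Poly_Mapping.keys (Poly_Mapping.single a c * f) = (+) a ` Poly_Mapping.keys f"
proof
  show "Poly_Mapping.keys (Poly_Mapping.single a c * f) \<subseteq> (+) a ` Poly_Mapping.keys f"
    using keys_mult[of "Poly_Mapping.single a c" f] assms by auto
  show "(+) a ` Poly_Mapping.keys f \<subseteq> Poly_Mapping.keys (Poly_Mapping.single a c * f)"
    using assms by (auto simp: in_keys_iff lookup_single_mult_add)
qed

lemma mdeg_single: "mdeg (Poly_Mapping.single l 1) = 1"
  by (simp add: mdeg_def)

definition var :: "nat \<Rightarrow> cpoly" where
  "var l = Poly_Mapping.single (Poly_Mapping.single l 1) 1"

lemma var_in_SymW: "l < N \<Longrightarrow> var l \<in> SymW N"
  by (simp add: var_def SymW_def)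

lemma var_mult:
  assumes f: "f \<in> SdW N e" "f \<noteq> 0" and l: "l < N"
  shows "var l * f \<in> SdW N (Suc e)" "var l * f \<noteq> 0"
    and "lead_mon (var l * f) = Poly_Mapping.single l 1 + lead_mon f"
proof -
  let ?s = "Poly_Mapping.single l (1::nat)"
  have keys: "Poly_Mapping.keys (var l * f) = (+) ?s ` Poly_Mapping.keys f"
    unfolding var_def by (rule keys_single_mult) simp
  show "var l * f \<noteq> 0"
    using keys f(2) by auto
  have "mono ((+) ?s)"
    by (rule monoI) (rule add_left_mono)
  then show "lead_mon (var l * f) = ?s + lead_mon f"
    unfolding lead_mon_def keys using f(2) by (simp add: mono_Max_commute)
  show "var l * f \<in> SdW N (Suc e)"
    unfolding SdW_def SymW_def
  proof (intro CollectI conjI ballI)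
    fix m assume "m \<in> Poly_Mapping.keys (var l * f)"
    then obtain b where b: "b \<in> Poly_Mapping.keys f" "m = ?s + b"
      using keys by auto
    then have "Poly_Mapping.keys b \<subseteq> {..<N}" "mdeg b = e"
      using f(1) by (auto simp: SdW_def SymW_def)
    then show "Poly_Mapping.keys m \<subseteq> {..<N}"
      using keys_add[of ?s b] l b(2) by auto
    show "mdeg m = Suc e"
      using b(2) \<open>mdeg b = e\<close> by (simp only: mdeg_add mdeg_single plus_1_eq_Suc)
  qed
qed

lemma lookup_single_add: "Poly_Mapping.lookup (Poly_Mapping.single l 1 + m) = incr l (Poly_Mapping.lookup m)"
  by (auto simp: incr_def lookup_add lookup_single when_def fun_eq_iff)

lemma up_shadow_lead_mons_subset:
  assumes I: "is_ideal N I"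
  shows "up_shadow N (Poly_Mapping.lookup ` lead_mons (I \<inter> SdW N e))
    \<subseteq> Poly_Mapping.lookup ` lead_mons (I \<inter> SdW N (Suc e))"
proof
  fix y assume "y \<in> up_shadow N (Poly_Mapping.lookup ` lead_mons (I \<inter> SdW N e))"
  then obtain l f where l: "l < N" and f: "f \<in> I" "f \<in> SdW N e" "f \<noteq> 0"
    and y: "y = incr l (Poly_Mapping.lookup (lead_mon f))"
    by (auto simp: up_shadow_def lead_mons_def)
  have "var l * f \<in> I"
    using I var_in_SymW[OF l] f(1) by (simp add: is_ideal_def)
  then have "var l * f \<in> I \<inter> SdW N (Suc e) - {0}"
    using var_mult[OF f(2,3) l] by simp
  then have "lead_mon (var l * f) \<in> lead_mons (I \<inter> SdW N (Suc e))"
    unfolding lead_mons_def by (rule imageI)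
  moreover have "Poly_Mapping.lookup (lead_mon (var l * f)) = y"
    using y by (simp only: var_mult(3)[OF f(2,3) l] lookup_single_add)
  ultimately show "y \<in> Poly_Mapping.lookup ` lead_mons (I \<inter> SdW N (Suc e))"
    by (metis imageI)
qed

lemma cdim_eq_card_lookup_lead_mons:
  "cs.subspace V \<Longrightarrow> V \<subseteq> SdW N e \<Longrightarrow> cdim V = card (Poly_Mapping.lookup ` lead_mons V)"
  by (simp add: cdim_def dim_eq_card_lead_mons card_image inj_on_subset[OF inj_lookup])

lemma cdim_SdW: "cdim (SdW N e) = card (exps N e)"
proof -
  have "lead_mons (SdW N e) = monomials N e"
  proof
    show "lead_mons (SdW N e) \<subseteq> monomials N e"
      by (rule lead_mons_subset_monomials) simp
    show "monomials N e \<subseteq> lead_mons (SdW N e)"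
    proof
      fix m assume "m \<in> monomials N e"
      moreover have "Poly_Mapping.single m (1::complex) \<noteq> 0"
        by (metis lookup_single_eq lookup_zero one_neq_zero)
      ultimately have "Poly_Mapping.single m 1 \<in> SdW N e - {0}"
        by (simp add: single_monomial_in_SdW)
      moreover have "lead_mon (Poly_Mapping.single m (1::complex)) = m"
        by (simp add: lead_mon_def)
      ultimately show "m \<in> lead_mons (SdW N e)"
        unfolding lead_mons_def by (metis imageI)
    qed
  qed
  then show ?thesis
    using cdim_eq_card_lookup_lead_mons[OF subspace_SdW order_refl] lookup_image_monomials by simp
qed

lemma cdim_ideal_component_step:
  assumes I: "is_ideal N I" and "k \<le> e" and "card (exps N k) \<le> cdim (I \<inter> SdW N e)"
  shows "card (exps N (Suc k)) \<le> cdim (I \<inter> SdW N (Suc e))"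
proof -
  let ?L = "\<lambda>e. Poly_Mapping.lookup ` lead_mons (I \<inter> SdW N e)"
  have cdim: "cdim (I \<inter> SdW N e') = card (?L e')" for e'
    by (rule cdim_eq_card_lookup_lead_mons[OF subspace_ideal_component[OF I] Int_lower2])
  have L: "?L e' \<subseteq> exps N e'" for e'
    using lead_mons_subset_monomials[of "I \<inter> SdW N e'" N e'] lookup_image_monomials by blast
  have "card (exps N (Suc k)) \<le> card (up_shadow N (?L e))"
    using card_exps_Suc_le_card_up_shadow[OF L assms(2)] assms(3) cdim by simp
  also have "\<dots> \<le> card (?L (Suc e))"
    by (rule card_mono[OF finite_subset_exps[OF L] up_shadow_lead_mons_subset[OF I]])
  finally show ?thesis
    by (simp only: cdim)
qed

theorem corollary2p4:
  fixes N q d :: nat and I :: "cpoly set"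
  assumes "is_homogeneous_ideal N I"
    and "q < d"
    and "cdim (I \<inter> SdW N d) \<ge> cdim (SdW N (d - q))"
  shows "\<forall>\<tau>::nat. cdim (I \<inter> SdW N (d + \<tau>)) \<ge> cdim (SdW N (d - q + \<tau>))"
proof
  fix \<tau> :: nat
  have I: "is_ideal N I"
    using assms(1) by (simp add: is_homogeneous_ideal_def)
  show "cdim (I \<inter> SdW N (d + \<tau>)) \<ge> cdim (SdW N (d - q + \<tau>))"
    unfolding cdim_SdW
  proof (induction \<tau>)
    case 0
    then show ?case using assms(3) by (simp add: cdim_SdW)
  next
    case (Suc \<tau>)
    then show ?case
      using cdim_ideal_component_step[OF I, of "d - q + \<tau>" "d + \<tau>"] by simp
  qed
qed

end
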